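(* Let $\mathcal{G}=(G,\odot,\leq)$ be a real continuous Alo-group with $G$ an open interval of $\mathbb{R}$ and identity $e$. For all $\tilde a=[a^-,a^+],\tilde b\in[G]$: (1) $\|\tilde a\|_{[\mathcal{G}]}=\|\tilde a^{(-1)}\|_{[\mathcal{G}]}$; (2) $a^-\leq\|\tilde a\|_{[\mathcal{G}]}$ and $a^+\leq\|\tilde a\|_{[\mathcal{G}]}$; (3) $\|\tilde a\|_{[\mathcal{G}]}\geq e$; (4) $\|\tilde a\|_{[\mathcal{G}]}=e\iff a^-=a^+=e$; (5) $\|\tilde a\odot_{[G]}\tilde b\|_{[\mathcal{G}]}\leq\|\tilde a\|_{[\mathcal{G}]}\odot\|\tilde b\|_{[\mathcal{G}]}$.
   Context: An Alo-group $(G,\odot,\leq)$ is an Abelian group with a weak order $\leq$ such that $a\leq b\Rightarrow a\odot c\leq b\odot c$; real means $G\subseteq\mathbb{R}$ with the usual order, continuous means $\odot$ is continuous. $a^{(-1)}$ is the inverse of $a$. The $\mathcal{G}$-norm is $\|a\|_{\mathcal{G}}=\max\{a,a^{(-1)}\}$. $[G]=\{[a^-,a^+]: a^-,a^+\in G,\ a^-\leq a^+\}$. The reciprocal interval is $\tilde a^{(-1)}=[(a^+)^{(-1)},(a^-)^{(-1)}]$, and $\tilde a\odot_{[G]}\tilde b=\{a\odot b: a\in\tilde a, b\in\tilde b\}$. The $[\mathcal{G}]$-norm is $\|\tilde a\|_{[\mathcal{G}]}=\max\{\|a^-\|_{\mathcal{G}},\|a^+\|_{\mathcal{G}}\}\in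 G$. *)

theory Defs
  imports "HOL-Analysis.Analysis"
begin

definition real_alo_group :: "real set \<Rightarrow> (real \<Rightarrow> real \<Rightarrow> real) \<Rightarrow> bool" where
  "real_alo_group G op \<longleftrightarrow>
     (\<forall>a\<in>G. \<forall>b\<in>G. op a b \<in> G) \<and>
     (\<forall>a\<in>G. \<forall>b\<in>G. \<forall>c\<in>G. op (op a b) c = op a (op b c)) \<and>
     (\<forall>a\<in>G. \<forall>b\<in>G. op a b = op b a) \<and>
     (\<exists>e\<in>G. (\<forall>a\<in>G. op e a = a) \<and> (\<forall>a\<in>G. \<exists>b\<in>G. op a b = e)) \<and>
     (\<forall>a\<in>G. \<forall>b\<in>G. \<forall>c\<in>G. a \<le> b \<longrightarrow> op a c \<le> op b c)"

definition alo_id :: "real set \<Rightarrow> (real \<Rightarrow> real \<Rightarrow> real) \<Rightarrow> real" where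
  "alo_id G op = (THE e. e \<in> G \<and> (\<forall>a\<in>G. op e a = a))"

definition alo_inv :: "real set \<Rightarrow> (real \<Rightarrow> real \<Rightarrow> real) \<Rightarrow> real \<Rightarrow> real" where
  "alo_inv G op a = (THE b. b \<in> G \<and> op a b = alo_id G op)"

definition gnorm :: "real set \<Rightarrow> (real \<Rightarrow> real \<Rightarrow> real) \<Rightarrow> real \<Rightarrow> real" where
  "gnorm G op a = max a (alo_inv G op a)"

text \<open>Intervals [a^-,a^+] are represented as the sets {a^-..a^+}; the [G]-norm is
max of the G-norms of the endpoints (lower endpoint = Inf, upper endpoint = Sup).\<close>
definition ivnorm :: "real set \<Rightarrow> (real \<Rightarrow> real \<Rightarrow> real) \<Rightarrow> real set \<Rightarrow> real" where
  "ivnorm G op A = max (gnorm G op (Inf A)) (gnorm G op (Sup A))"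

definition iv_inv :: "real set \<Rightarrow> (real \<Rightarrow> real \<Rightarrow> real) \<Rightarrow> real \<Rightarrow> real \<Rightarrow> real set" where
  "iv_inv G op lo hi = {alo_inv G op hi .. alo_inv G op lo}"

definition iv_mult :: "(real \<Rightarrow> real \<Rightarrow> real) \<Rightarrow> real set \<Rightarrow> real set \<Rightarrow> real set" where
  "iv_mult op A B = {op a b | a b. a \<in> A \<and> b \<in> B}"

end

theory Submission
  imports Defs
begin

text \<open>Everything is a consequence of two facts about the \<open>\<G>\<close>-norm in an Alo-group:
inversion is antitone, so \<open>\<parallel>a\<parallel> \<ge> e\<close> with equality only at \<open>e\<close>, and
\<open>\<parallel>a \<odot> b\<parallel> \<le> \<parallel>a\<parallel> \<odot> \<parallel>b\<parallel>\<close> by monotonicity of \<open>\<odot>\<close> in both arguments.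
By monotonicity again, \<open>\<tilde>a \<odot>\<^bsub>[G]\<^esub> \<tilde>b\<close> has least element \<open>a\<^sup>- \<odot> b\<^sup>-\<close> and greatest
element \<open>a\<^sup>+ \<odot> b\<^sup>+\<close>, which reduces the interval statements to the pointwise ones.\<close>

locale real_alo =
  fixes G :: "real set" and op :: "real \<Rightarrow> real \<Rightarrow> real"
  assumes real_alo_group: "real_alo_group G op"
begin

lemma closed: "a \<in> G \<Longrightarrow> b \<in> G \<Longrightarrow> op a b \<in> G"
  using real_alo_group unfolding real_alo_group_def by blast

lemma assoc: "a \<in> G \<Longrightarrow> b \<in> G \<Longrightarrow> c \<in> G \<Longrightarrow> op (op a b) c = op a (op b c)"
  using real_alo_group unfolding real_alo_group_def by blast

lemma commute: "a \<in> G \<Longrightarrow> b \<in> G \<Longrightarrow> op a b = op b a"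
  using real_alo_group unfolding real_alo_group_def by blast

lemma mono_left: "a \<in> G \<Longrightarrow> b \<in> G \<Longrightarrow> c \<in> G \<Longrightarrow> a \<le> b \<Longrightarrow> op a c \<le> op b c"
  using real_alo_group unfolding real_alo_group_def by blast

lemma mono_right: "a \<in> G \<Longrightarrow> b \<in> G \<Longrightarrow> c \<in> G \<Longrightarrow> a \<le> b \<Longrightarrow> op c a \<le> op c b"
  using mono_left commute by metis

lemma mono:
  assumes "a \<in> G" "a' \<in> G" "b \<in> G" "b' \<in> G" "a \<le> a'" "b \<le> b'"
  shows "op a b \<le> op a' b'"
  using mono_left[of a a' b] mono_right[of b b' a'] assms by linarith

abbreviation e :: real where "e \<equiv> alo_id G op"
abbreviation ginv :: "real \<Rightarrow> real" where "ginv \<equiv> alo_inv G op"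
abbreviation gn :: "real \<Rightarrow> real" where "gn \<equiv> gnorm G op"

lemma alo_id_props: "e \<in> G \<and> (\<forall>a\<in>G. op e a = a) \<and> (\<forall>a\<in>G. \<exists>b\<in>G. op a b = e)"
proof -
  obtain u where u: "u \<in> G" "\<forall>a\<in>G. op u a = a" "\<forall>a\<in>G. \<exists>b\<in>G. op a b = u"
    using real_alo_group unfolding real_alo_group_def by blast
  have "e = u" unfolding alo_id_def
  proof (rule the_equality)
    fix u' assume "u' \<in> G \<and> (\<forall>a\<in>G. op u' a = a)"
    then show "u' = u" using u commute by metis
  qed (use u in auto)
  then show ?thesis using u by simp
qed

lemma id_in: "e \<in> G"
  using alo_id_props by blast

lemma left_id: "a \<in> G \<Longrightarrow> op e a = a"
  using alo_id_props by blast

lemma right_id: "a \<in> G \<Longrightarrow> op a e = a"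
  using left_id commute id_in by metis

lemma inverse_unique:
  assumes "a \<in> G" "b \<in> G" "b' \<in> G" "op a b = e" "op a b' = e"
  shows "b' = b"
proof -
  have "b' = op (op b a) b'" using assms left_id commute by metis
  also have "\<dots> = op b (op a b')" using assoc assms by metis
  also have "\<dots> = b" using assms right_id by simp
  finally show ?thesis .
qed

lemma inv_props:
  assumes "a \<in> G"
  shows "ginv a \<in> G \<and> op a (ginv a) = e"
proof -
  obtain b where b: "b \<in> G" "op a b = e" using alo_id_props assms by blast
  have "ginv a = b" unfolding alo_inv_def
    by (rule the_equality) (use b assms inverse_unique in auto)
  then show ?thesis using b by simp
qed

lemma inv_in: "a \<in> G \<Longrightarrow> ginv a \<in> G"
  using inv_props by blast

lemma right_inverse: "a \<in> G \<Longrightarrow> op a (ginv a) = e"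
  using inv_props by blast

lemma inv_eqI: "a \<in> G \<Longrightarrow> b \<in> G \<Longrightarrow> op a b = e \<Longrightarrow> ginv a = b"
  using inverse_unique inv_props by metis

lemma inv_inv: "a \<in> G \<Longrightarrow> ginv (ginv a) = a"
  using inv_eqI inv_props commute by metis

lemma inv_id: "ginv e = e"
  using inv_eqI id_in left_id by metis

lemma inv_op:
  assumes "a \<in> G" "b \<in> G"
  shows "ginv (op a b) = op (ginv a) (ginv b)"
proof (rule inv_eqI)
  show "op a b \<in> G" "op (ginv a) (ginv b) \<in> G" using assms closed inv_in by auto
  have "op (op a b) (op (ginv a) (ginv b)) = op (op a (ginv a)) (op b (ginv b))"
    using assms assoc commute closed inv_in by metis
  then show "op (op a b) (op (ginv a) (ginv b)) = e"
    using assms right_inverse left_id id_in by simp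
qed

lemma inv_antimono:
  assumes "a \<in> G" "b \<in> G" "a \<le> b"
  shows "ginv b \<le> ginv a"
proof -
  have "op a (op (ginv a) (ginv b)) \<le> op b (op (ginv a) (ginv b))"
    using mono_left assms closed inv_in by blast
  moreover have "op a (op (ginv a) (ginv b)) = ginv b"
    using assms assoc right_inverse left_id inv_in by metis
  moreover have "op b (op (ginv a) (ginv b)) = ginv a"
    using assms assoc right_inverse right_id commute inv_in by metis
  ultimately show ?thesis by simp
qed

lemma gnorm_in: "a \<in> G \<Longrightarrow> gn a \<in> G"
  unfolding gnorm_def max_def using inv_in by auto

lemma le_gnorm: "a \<le> gn a" "ginv a \<le> gn a"
  unfolding gnorm_def by auto

lemma gnorm_inv: "a \<in> G \<Longrightarrow> gn (ginv a) = gn a"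
  unfolding gnorm_def using inv_inv by (simp add: max.commute)

lemma gnorm_id: "gn e = e"
  unfolding gnorm_def using inv_id by simp

lemma id_le_gnorm:
  assumes "a \<in> G"
  shows "e \<le> gn a"
proof (cases "e \<le> a")
  case False
  then have "e \<le> ginv a" using inv_antimono[of a e] assms id_in inv_id by simp
  then show ?thesis using le_gnorm(2)[of a] by linarith
qed (use le_gnorm(1)[of a] in linarith)

lemma gnorm_eq_id_iff: "a \<in> G \<Longrightarrow> gn a = e \<longleftrightarrow> a = e"
proof
  assume a: "a \<in> G" and "gn a = e"
  then have "a \<le> e" "ginv a \<le> e" using le_gnorm by metis+
  then have "ginv e \<le> ginv (ginv a)" using inv_antimono a inv_in id_in by blast
  then show "a = e" using \<open>a \<le> e\<close> a inv_inv inv_id by simp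
qed (simp add: gnorm_id)

lemma gnorm_op_le:
  assumes "a \<in> G" "b \<in> G"
  shows "gn (op a b) \<le> op (gn a) (gn b)"
proof -
  have "op a b \<le> op (gn a) (gn b)"
    by (rule mono) (use assms gnorm_in le_gnorm in auto)
  moreover have "op (ginv a) (ginv b) \<le> op (gn a) (gn b)"
    by (rule mono) (use assms gnorm_in inv_in le_gnorm in auto)
  ultimately show ?thesis
    unfolding gnorm_def[of G op "op a b"] using inv_op assms by simp
qed

lemma ivnorm_atLeastAtMost: "lo \<le> hi \<Longrightarrow> ivnorm G op {lo..hi} = max (gn lo) (gn hi)"
  unfolding ivnorm_def by simp

lemma ivnorm_iv_inv:
  assumes "lo \<in> G" "hi \<in> G" "lo \<le> hi"
  shows "ivnorm G op (iv_inv G op lo hi) = ivnorm G op {lo..hi}"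
  using assms inv_antimono[OF assms] gnorm_inv
  by (simp add: iv_inv_def ivnorm_atLeastAtMost max.commute)

lemma iv_mult_bounds:
  assumes "{am..ap} \<subseteq> G" "{bm..bp} \<subseteq> G" "x \<in> iv_mult op {am..ap} {bm..bp}"
  shows "op am bm \<le> x \<and> x \<le> op ap bp"
proof -
  obtain u v where "x = op u v" "u \<in> {am..ap}" "v \<in> {bm..bp}"
    using assms(3) unfolding iv_mult_def by blast
  moreover have "am \<in> G" "ap \<in> G" "bm \<in> G" "bp \<in> G" "u \<in> G" "v \<in> G"
    using assms(1,2) calculation(2,3) by auto
  ultimately show ?thesis using mono[of am u bm v] mono[of u ap v bp] by auto
qed

lemma
  assumes "{am..ap} \<subseteq> G" "{bm..bp} \<subseteq> G" "am \<le> ap" "bm \<le> bp"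
  shows Inf_iv_mult: "Inf (iv_mult op {am..ap} {bm..bp}) = op am bm"
    and Sup_iv_mult: "Sup (iv_mult op {am..ap} {bm..bp}) = op ap bp"
proof -
  have "op am bm \<in> iv_mult op {am..ap} {bm..bp}" "op ap bp \<in> iv_mult op {am..ap} {bm..bp}"
    unfolding iv_mult_def using assms(3,4) by auto
  then show "Inf (iv_mult op {am..ap} {bm..bp}) = op am bm"
    and "Sup (iv_mult op {am..ap} {bm..bp}) = op ap bp"
    using iv_mult_bounds[OF assms(1,2)] by (auto intro: cInf_eq_minimum cSup_eq_maximum)
qed

lemma ivnorm_iv_mult_le:
  assumes A: "{am..ap} \<subseteq> G" "am \<le> ap" and B: "{bm..bp} \<subseteq> G" "bm \<le> bp"
  shows "ivnorm G op (iv_mult op {am..ap} {bm..bp})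
    \<le> op (ivnorm G op {am..ap}) (ivnorm G op {bm..bp})"
proof -
  let ?NA = "ivnorm G op {am..ap}" and ?NB = "ivnorm G op {bm..bp}"
  have "am \<in> G" "ap \<in> G" "bm \<in> G" "bp \<in> G" using A B by auto
  then have NA: "?NA \<in> G" "gn am \<le> ?NA" "gn ap \<le> ?NA"
    and NB: "?NB \<in> G" "gn bm \<le> ?NB" "gn bp \<le> ?NB"
    using A(2) B(2) by (auto simp: ivnorm_atLeastAtMost max_def gnorm_in)
  have "gn (op x y) \<le> op ?NA ?NB"
    if "x \<in> G" "y \<in> G" "gn x \<le> ?NA" "gn y \<le> ?NB" for x y
  proof -
    have "gn (op x y) \<le> op (gn x) (gn y)" using gnorm_op_le that by simp
    also have "\<dots> \<le> op ?NA ?NB" by (rule mono) (use that NA NB gnorm_in in auto)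
    finally show ?thesis .
  qed
  then show ?thesis
    unfolding ivnorm_def[of G op "iv_mult _ _ _"] Inf_iv_mult[OF A(1) B(1) A(2) B(2)]
      Sup_iv_mult[OF A(1) B(1) A(2) B(2)]
    using NA NB \<open>am \<in> G\<close> \<open>ap \<in> G\<close> \<open>bm \<in> G\<close> \<open>bp \<in> G\<close> by simp
qed

end

lemma atLeastAtMost_subset_interval:
  fixes S :: "real set"
  shows "is_interval S \<Longrightarrow> a \<in> S \<Longrightarrow> b \<in> S \<Longrightarrow> {a..b} \<subseteq> S"
  by (meson atLeastAtMost_iff mem_is_interval_1_I subsetI)

theorem proposition6:
  fixes G :: "real set" and op :: "real \<Rightarrow> real \<Rightarrow> real"
    and am ap bm bp :: real
  assumes alo: "real_alo_group G op"
    and cont: "continuous_on (G \<times> G) (\<lambda>(x, y). op x y)"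
    and G_open_interval: "open G" "is_interval G" "G \<noteq> {}"
    and a: "am \<in> G" "ap \<in> G" "am \<le> ap"
    and b: "bm \<in> G" "bp \<in> G" "bm \<le> bp"
  shows "ivnorm G op {am..ap} = ivnorm G op (iv_inv G op am ap)
    \<and> am \<le> ivnorm G op {am..ap} \<and> ap \<le> ivnorm G op {am..ap}
    \<and> ivnorm G op {am..ap} \<ge> alo_id G op
    \<and> (ivnorm G op {am..ap} = alo_id G op \<longleftrightarrow> am = alo_id G op \<and> ap = alo_id G op)
    \<and> ivnorm G op (iv_mult op {am..ap} {bm..bp})
        \<le> op (ivnorm G op {am..ap}) (ivnorm G op {bm..bp})"
proof -
  interpret real_alo G op by (rule real_alo.intro[OF alo])
  have norm_A: "ivnorm G op {am..ap} = max (gn am) (gn ap)"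
    using a(3) by (rule ivnorm_atLeastAtMost)
  have "am \<le> ivnorm G op {am..ap} \<and> ap \<le> ivnorm G op {am..ap}"
    unfolding norm_A using le_gnorm(1)[of am] le_gnorm(1)[of ap] by linarith
  moreover have "e \<le> ivnorm G op {am..ap}"
    unfolding norm_A using id_le_gnorm a by (simp add: le_max_iff_disj)
  moreover have "ivnorm G op {am..ap} = e \<longleftrightarrow> am = e \<and> ap = e"
  proof -
    have "max (gn am) (gn ap) = e \<longleftrightarrow> gn am = e \<and> gn ap = e"
      using id_le_gnorm[of am] id_le_gnorm[of ap] a by (auto simp: max_def)
    then show ?thesis unfolding norm_A using gnorm_eq_id_iff a by simp
  qed
  moreover have "ivnorm G op (iv_mult op {am..ap} {bm..bp})
      \<le> op (ivnorm G op {am..ap}) (ivnorm G op {bm..bp})"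
    by (rule ivnorm_iv_mult_le) (use atLeastAtMost_subset_interval[OF G_open_interval(2)] a b in auto)
  ultimately show ?thesis
    using ivnorm_iv_inv a by simp
qed

end
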